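(* For any boolean permutation $v\in\mathfrak{S}_n$, we have $\lambda_2(v)=\textsf{run}(v)$.
   Context: Permutations are composed right to left; $\sigma_i=(i,i+1)$, and a reduced word of a permutation is the sequence of subscripts in a reduced (minimal length) expression as a product of the $\sigma_i$. A permutation is boolean if its reduced words contain no repeated letters (equivalently its principal Bruhat order ideal is a boolean lattice). A run is a sequence of consecutive integers that is either increasing or decreasing, e.g. $a(a+1)\cdots(a+b)$ or $(a+b)\cdots(a+1)a$ with $b\ge0$. For boolean $v$, $\textsf{run}(v)$ is the fewest number of runs whose concatenation is a reduced word for $v$. Under the Robinson–Schensted correspondence (Schensted insertion), $v$ corresponds to a pair of standard Young tableaux of a common shape $\lambda(v)$; $\lambda_i(v)$ denotes the length of the $i$-th row of this shape (zero if there is no such row). *)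

theory Defs
  imports "HOL-Combinatorics.Combinatorics"
begin

text \<open>Permutations of {1..n}; simple transposition sigma_i = (i, i+1).
  A word [a1,...,ak] denotes sigma_a1 o ... o sigma_ak (composition right to left).\<close>

definition simple_transp :: "nat \<Rightarrow> nat \<Rightarrow> nat" where
  "simple_transp i = Transposition.transpose i (Suc i)"

definition word_perm :: "nat list \<Rightarrow> nat \<Rightarrow> nat" where
  "word_perm w = foldr (\<lambda>i f. simple_transp i \<circ> f) w id"

definition is_word :: "nat \<Rightarrow> (nat \<Rightarrow> nat) \<Rightarrow> nat list \<Rightarrow> bool" where
  "is_word n v w \<longleftrightarrow> set w \<subseteq> {1..<n} \<and> word_perm w = v"

definition perm_length :: "nat \<Rightarrow> (nat \<Rightarrow> nat) \<Rightarrow> nat" where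
  "perm_length n v = (LEAST k. \<exists>w. is_word n v w \<and> length w = k)"

definition reduced_word :: "nat \<Rightarrow> (nat \<Rightarrow> nat) \<Rightarrow> nat list \<Rightarrow> bool" where
  "reduced_word n v w \<longleftrightarrow> is_word n v w \<and> length w = perm_length n v"

definition boolean_perm :: "nat \<Rightarrow> (nat \<Rightarrow> nat) \<Rightarrow> bool" where
  "boolean_perm n v \<longleftrightarrow> (\<forall>w. reduced_word n v w \<longrightarrow> distinct w)"

definition is_run :: "nat list \<Rightarrow> bool" where
  "is_run r \<longleftrightarrow> (\<exists>a b. r = [a..<a+b+1] \<or> r = rev [a..<a+b+1])"

definition run_num :: "nat \<Rightarrow> (nat \<Rightarrow> nat) \<Rightarrow> nat" where
  "run_num n v = (LEAST k. \<exists>rs. length rs = k \<and> (\<forall>r\<in>set rs. is_run r)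
                              \<and> reduced_word n v (concat rs))"

fun bump :: "nat list \<Rightarrow> nat \<Rightarrow> nat list \<times> nat option" where
  "bump [] x = ([x], None)"
| "bump (y # ys) x = (if x < y then (x # ys, Some y)
                      else (let (ys', z) = bump ys x in (y # ys', z)))"

fun rs_insert :: "nat list list \<Rightarrow> nat \<Rightarrow> nat list list" where
  "rs_insert [] x = [[x]]"
| "rs_insert (r # rs) x = (case bump r x of
        (r', None) \<Rightarrow> r' # rs
      | (r', Some y) \<Rightarrow> r' # rs_insert rs y)"

definition P_tableau :: "nat \<Rightarrow> (nat \<Rightarrow> nat) \<Rightarrow> nat list list" where
  "P_tableau n v = foldl rs_insert [] (map v [1..<Suc n])"

definition rs_shape :: "nat \<Rightarrow> (nat \<Rightarrow> nat) \<Rightarrow> nat list" where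
  "rs_shape n v = map length (P_tableau n v)"

definition lambda_row :: "nat \<Rightarrow> (nat \<Rightarrow> nat) \<Rightarrow> nat \<Rightarrow> nat" where
  "lambda_row n v i = (if 1 \<le> i \<and> i \<le> length (rs_shape n v) then rs_shape n v ! (i - 1) else 0)"

end

theory Submission
  imports Defs
begin

text \<open>A boolean permutation has a reduced word w without repeated letters, and such a word
  represents a permutation that depends only on its set of letters and on which letters k are
  preceded in w by k - 1. Reading the letters in increasing order, the one-line notation of the
  restriction to {1..k+1} arises from that of {1..k} by one of three moves (append k + 1; insert
  k + 1 before the last entry; raise the value k to k + 1 and append k), and the effect of each
  move on the second row of the insertion tableau depends only on two bits of state. Hence the
  length of the second row is computed by a counter scanning 1, ..., n - 1. In a factorisation
  of a reduced word into runs, a letter linked to its predecessor inside a run never increases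
  this counter, so the counter is at most the number of runs; a greedy factorisation, extending
  the increasing or decreasing run that ends in k - 1 whenever possible, attains it.\<close>

section \<open>Words and the permutations they represent\<close>

lemma word_perm_Nil [simp]: "word_perm [] = id"
  by (simp add: word_perm_def)

lemma word_perm_Cons [simp]: "word_perm (i # w) = simple_transp i \<circ> word_perm w"
  by (simp add: word_perm_def)

lemma word_perm_append: "word_perm (xs @ ys) = word_perm xs \<circ> word_perm ys"
  by (induction xs) (auto simp: o_assoc)

lemma simple_transp_commute:
  "Suc j < k \<Longrightarrow> simple_transp j \<circ> simple_transp k = simple_transp k \<circ> simple_transp j"
  by (rule ext) (auto simp: simple_transp_def transpose_def)

lemma word_perm_commute_simple_transp:
  assumes "\<forall>j\<in>set ys. Suc j < k"
  shows "word_perm ys \<circ> simple_transp k = simple_transp k \<circ> word_perm ys"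
  using assms
proof (induction ys)
  case (Cons a ys)
  have "word_perm (a # ys) \<circ> simple_transp k = simple_transp a \<circ> (word_perm ys \<circ> simple_transp k)"
    by (simp add: o_assoc)
  also have "\<dots> = (simple_transp a \<circ> simple_transp k) \<circ> word_perm ys"
    using Cons by (simp add: fun_eq_iff)
  also have "\<dots> = simple_transp k \<circ> word_perm (a # ys)"
    using Cons.prems simple_transp_commute[of a k] by (simp add: o_assoc)
  finally show ?case .
qed simp

lemma word_perm_move_last:
  assumes "\<forall>j\<in>set ys. Suc j < k"
  shows "word_perm (xs @ k # ys) = word_perm (xs @ ys) \<circ> simple_transp k"
proof -
  have "word_perm (xs @ k # ys) = word_perm xs \<circ> (simple_transp k \<circ> word_perm ys)"
    by (simp add: word_perm_append)
  also have "\<dots> = word_perm xs \<circ> (word_perm ys \<circ> simple_transp k)"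
    using word_perm_commute_simple_transp[OF assms] by simp
  finally show ?thesis
    by (simp add: word_perm_append o_assoc)
qed

lemma word_perm_move_first:
  assumes "\<forall>j\<in>set xs. Suc j < k"
  shows "word_perm (xs @ k # ys) = simple_transp k \<circ> word_perm (xs @ ys)"
proof -
  have "word_perm (xs @ k # ys) = (word_perm xs \<circ> simple_transp k) \<circ> word_perm ys"
    by (simp add: word_perm_append o_assoc)
  also have "\<dots> = (simple_transp k \<circ> word_perm xs) \<circ> word_perm ys"
    using word_perm_commute_simple_transp[OF assms] by simp
  finally show ?thesis
    by (simp add: word_perm_append o_assoc)
qed

lemma word_perm_permutes: "set w \<subseteq> {1..<n} \<Longrightarrow> word_perm w permutes {1..n}"
proof (induction w)
  case (Cons a w)
  have "simple_transp a permutes {1..n}"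
    using Cons.prems unfolding simple_transp_def by (intro permutes_swap_id) auto
  moreover have "word_perm w permutes {1..n}"
    using Cons by simp
  ultimately show ?case
    unfolding word_perm_Cons by (rule permutes_compose[rotated])
qed (auto simp: permutes_def)

primrec transposition_word :: "nat \<Rightarrow> nat \<Rightarrow> nat list" where
  "transposition_word a 0 = [a]"
| "transposition_word a (Suc d) = Suc (a + d) # transposition_word a d @ [Suc (a + d)]"

lemma word_perm_transposition_word:
  "word_perm (transposition_word a d) = Transposition.transpose a (Suc (a + d))"
proof (induction d)
  case (Suc d)
  show ?case
    unfolding transposition_word.simps word_perm_Cons word_perm_append Suc
    by (rule ext) (auto simp: simple_transp_def transpose_def)
qed (simp add: simple_transp_def)

lemma set_transposition_word: "set (transposition_word a d) = {a..a + d}"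
  by (induction d) (simp_all add: atLeastAtMostSuc_conv)

lemma word_exists:
  assumes "v permutes {1..n}"
  shows "\<exists>w. is_word n v w"
  using assms finite_atLeastAtMost[of 1 n]
proof (induction rule: permutes_induct)
  case id
  have "is_word n id []"
    by (simp add: is_word_def)
  then show ?case ..
next
  case (swap a b p)
  have transp_word: "is_word n (Transposition.transpose a b) (transposition_word a (b - a - 1))"
    if "1 \<le> a" "a < b" "b \<le> n" for a b
    using that by (auto simp: is_word_def word_perm_transposition_word set_transposition_word)
  from swap obtain w where "is_word n p w"
    by blast
  moreover obtain t where "is_word n (Transposition.transpose a b) t"
    using swap.hyps transp_word[of a b] transp_word[of b a]
    by (cases a b rule: linorder_cases) (auto simp: transpose_commute)
  ultimately have "is_word n (Transposition.transpose a b \<circ> p) (t @ w)"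
    by (simp add: is_word_def word_perm_append)
  then show ?case ..
qed

lemma reduced_word_exists:
  assumes "v permutes {1..n}"
  shows "\<exists>w. reduced_word n v w"
proof -
  obtain w where "is_word n v w"
    using word_exists[OF assms] ..
  then have "\<exists>k w. is_word n v w \<and> length w = k"
    by blast
  from LeastI_ex[OF this] show ?thesis
    unfolding reduced_word_def perm_length_def by blast
qed

section \<open>Words without repeated letters\<close>

definition pred_precedes :: "nat list \<Rightarrow> nat \<Rightarrow> bool" where
  "pred_precedes w k \<longleftrightarrow> (\<exists>xs ys. w = xs @ k # ys \<and> k - 1 \<in> set xs)"

lemma pred_precedes_split:
  assumes "distinct (xs @ k # ys)"
  shows "pred_precedes (xs @ k # ys) k \<longleftrightarrow> k - 1 \<in> set xs"
proof
  assume "pred_precedes (xs @ k # ys) k"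
  then obtain as bs where eq: "xs @ k # ys = as @ k # bs" and "k - 1 \<in> set as"
    by (auto simp: pred_precedes_def)
  moreover have "distinct (as @ k # bs)"
    using eq assms by simp
  moreover have "k \<notin> set xs" "k \<notin> set ys"
    using assms by auto
  ultimately show "k - 1 \<in> set xs"
    using append_Cons_eq_iff[of k xs ys as bs] by auto
qed (auto simp: pred_precedes_def)

lemma pred_precedes_imp_mem: "pred_precedes w k \<Longrightarrow> k \<in> set w \<and> k - 1 \<in> set w"
  by (auto simp: pred_precedes_def)

lemma pred_precedes_filter:
  assumes "distinct w" "P k" "P (k - 1)"
  shows "pred_precedes (filter P w) k \<longleftrightarrow> pred_precedes w k"
proof (cases "k \<in> set w")
  case True
  then obtain xs ys where w: "w = xs @ k # ys"
    by (meson split_list)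
  have "filter P w = filter P xs @ k # filter P ys"
    using w assms by simp
  moreover have "distinct (filter P w)"
    using assms by simp
  ultimately show ?thesis
    using pred_precedes_split assms w by simp
next
  case False
  then show ?thesis
    using pred_precedes_imp_mem by fastforce
qed

lemma pred_precedes_filter_less:
  "distinct w \<Longrightarrow> j < K \<Longrightarrow> pred_precedes (filter (\<lambda>i. i < K) w) j = pred_precedes w j"
  by (rule pred_precedes_filter) auto

text \<open>The greatest letter commutes with every letter except its predecessor, so it can be carried
  to the end of the word on the side away from k - 1.\<close>

lemma word_perm_remove_greatest:
  assumes "distinct w" "k \<in> set w" "\<forall>j\<in>set w. j \<le> k"
  shows "word_perm w = (if pred_precedes w k then word_perm (removeAll k w) \<circ> simple_transp k
                        else simple_transp k \<circ> word_perm (removeAll k w))"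
proof -
  obtain xs ys where w: "w = xs @ k # ys"
    using assms(2) by (meson split_list)
  have dist: "distinct (xs @ k # ys)"
    using assms(1) w by simp
  have removed: "removeAll k w = xs @ ys"
    using dist w by simp
  have far: "Suc j < k" if "j \<in> set w" "j \<noteq> k" "j \<noteq> k - 1" for j
  proof -
    have "j \<le> k"
      using that(1) assms(3) by blast
    with that(2,3) show ?thesis
      by linarith
  qed
  show ?thesis
  proof (cases "k - 1 \<in> set xs")
    case True
    have "\<forall>j\<in>set ys. Suc j < k"
      using dist True by (intro ballI far) (auto simp: w)
    then have "word_perm w = word_perm (removeAll k w) \<circ> simple_transp k"
      unfolding removed unfolding w by (rule word_perm_move_last)
    moreover have "pred_precedes w k"
      using pred_precedes_split[OF dist] True by (simp add: w)
    ultimately show ?thesis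
      by simp
  next
    case False
    have "\<forall>j\<in>set xs. Suc j < k"
      using dist False by (intro ballI far) (auto simp: w)
    then have "word_perm w = simple_transp k \<circ> word_perm (removeAll k w)"
      unfolding removed unfolding w by (rule word_perm_move_first)
    moreover have "\<not> pred_precedes w k"
      using pred_precedes_split[OF dist] False by (simp add: w)
    ultimately show ?thesis
      by simp
  qed
qed

lemma word_perm_filter_less_Suc:
  assumes "distinct w"
  shows "word_perm (filter (\<lambda>j. j < Suc k) w) =
     (if k \<notin> set w then word_perm (filter (\<lambda>j. j < k) w)
      else if pred_precedes w k then word_perm (filter (\<lambda>j. j < k) w) \<circ> simple_transp k
      else simple_transp k \<circ> word_perm (filter (\<lambda>j. j < k) w))"
proof (cases "k \<in> set w")
  case False
  then have "filter (\<lambda>j. j < Suc k) w = filter (\<lambda>j. j < k) w"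
    by (intro filter_cong) (auto simp: less_Suc_eq)
  then show ?thesis
    using False by simp
next
  case True
  let ?w = "filter (\<lambda>j. j < Suc k) w"
  have "removeAll k ?w = filter (\<lambda>j. j < k) w"
    by (induction w) auto
  moreover have "pred_precedes ?w k = pred_precedes w k"
    using pred_precedes_filter[OF assms, of "\<lambda>j. j < Suc k" k] by simp
  moreover have "distinct ?w" "k \<in> set ?w" "\<forall>j\<in>set ?w. j \<le> k"
    using True assms by auto
  ultimately show ?thesis
    using word_perm_remove_greatest[of ?w k] True by simp
qed

lemma word_perm_eq_if_same_precedences:
  assumes "distinct w" "distinct w'" "set w = set w'"
    and "\<And>j. pred_precedes w j = pred_precedes w' j"
  shows "word_perm w = word_perm w'"
proof -
  have eq: "word_perm (filter (\<lambda>j. j < K) w) = word_perm (filter (\<lambda>j. j < K) w')" for K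
  proof (induction K)
    case (Suc K)
    then show ?case
      using assms(3,4)
      by (simp add: word_perm_filter_less_Suc[OF assms(1)] word_perm_filter_less_Suc[OF assms(2)])
  qed simp
  obtain K where "\<forall>j\<in>set w. j < K"
    using finite_nat_set_iff_bounded by blast
  then have "filter (\<lambda>j. j < K) w = w" "filter (\<lambda>j. j < K) w' = w'"
    using assms(3) by simp_all
  then show ?thesis
    using eq[of K] by simp
qed

section \<open>Row insertion\<close>

definition insertion_tableau :: "nat list \<Rightarrow> nat list list" where
  "insertion_tableau xs = foldl rs_insert [] xs"

definition first_row :: "nat list list \<Rightarrow> nat list" where
  "first_row T = (case T of [] \<Rightarrow> [] | r # _ \<Rightarrow> r)"

abbreviation second_row :: "nat list list \<Rightarrow> nat list" where
  "second_row T \<equiv> first_row (tl T)"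

definition last_exceeds_first_row :: "nat list \<Rightarrow> bool" where
  "last_exceeds_first_row u \<longleftrightarrow> (\<forall>z\<in>set (first_row (insertion_tableau (butlast u))). z < last u)"

lemma first_row_Nil [simp]: "first_row [] = []"
  by (simp add: first_row_def)

lemma first_row_Cons [simp]: "first_row (r # T) = r"
  by (simp add: first_row_def)

lemma first_row_map: "first_row (map (map f) T) = map f (first_row T)"
  by (cases T) auto

lemma set_first_row_subset: "set (first_row T) \<subseteq> set (concat T)"
  by (cases T) auto

lemma insertion_tableau_Nil [simp]: "insertion_tableau [] = []"
  by (simp add: insertion_tableau_def)

lemma insertion_tableau_snoc: "insertion_tableau (xs @ [x]) = rs_insert (insertion_tableau xs) x"
  by (simp add: insertion_tableau_def)

lemma mset_bump:
  "bump r x = (r', z) \<Longrightarrow>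
     mset r' + (case z of None \<Rightarrow> {#} | Some y \<Rightarrow> {#y#}) = add_mset x (mset r)"
  by (induction r x arbitrary: r' z rule: bump.induct) (auto split: if_splits prod.splits)

lemma mset_concat_rs_insert: "mset (concat (rs_insert T x)) = add_mset x (mset (concat T))"
proof (induction T x rule: rs_insert.induct)
  case (2 r rs x)
  obtain r' z where "bump r x = (r', z)"
    by fastforce
  with mset_bump[OF this] "2.IH"[OF this[symmetric]] show ?case
    by (cases z) auto
qed simp

lemma mset_concat_insertion_tableau: "mset (concat (insertion_tableau xs)) = mset xs"
  by (induction xs rule: rev_induct) (auto simp: insertion_tableau_snoc mset_concat_rs_insert)

lemma set_concat_insertion_tableau: "set (concat (insertion_tableau xs)) = set xs"
  by (metis mset_concat_insertion_tableau set_mset_mset)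

lemma distinct_concat_insertion_tableau: "distinct xs \<Longrightarrow> distinct (concat (insertion_tableau xs))"
  by (metis mset_concat_insertion_tableau mset_eq_imp_distinct_iff)

lemma bump_greatest: "\<forall>z\<in>set r. z \<le> x \<Longrightarrow> bump r x = (r @ [x], None)"
  by (induction r) auto

lemma rs_insert_greatest:
  "\<forall>z\<in>set (first_row T). z < x \<Longrightarrow> rs_insert T x = (first_row T @ [x]) # tl T"
  by (cases T) (auto simp: bump_greatest less_imp_le)

lemma bump_at: "\<forall>z\<in>set r. z \<le> x \<Longrightarrow> x < y \<Longrightarrow> bump (r @ y # s) x = (r @ x # s, Some y)"
  by (induction r) auto

lemma bump_append_Some: "bump r x = (r', Some y) \<Longrightarrow> bump (r @ s) x = (r' @ s, Some y)"
  by (induction r x arbitrary: r' rule: bump.induct) (auto split: if_splits prod.splits)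

lemma snd_bump_not_None: "\<exists>z\<in>set r. x < z \<Longrightarrow> snd (bump r x) \<noteq> None"
  by (induction r) (fastforce split: prod.splits)+

lemma bump_map_strict_mono:
  "strict_mono f \<Longrightarrow>
     bump (map f r) (f x) = (map f (fst (bump r x)), map_option f (snd (bump r x)))"
  by (induction r) (auto simp: strict_mono_less split: prod.splits)

lemma rs_insert_map_strict_mono:
  assumes "strict_mono f"
  shows "rs_insert (map (map f) T) (f x) = map (map f) (rs_insert T x)"
proof (induction T x rule: rs_insert.induct)
  case (2 r rs x)
  obtain r' z where "bump r x = (r', z)"
    by fastforce
  with bump_map_strict_mono[OF assms, of r x] "2.IH"[OF this[symmetric]] show ?case
    by (cases z) auto
qed simp

lemma insertion_tableau_map_strict_mono:
  "strict_mono f \<Longrightarrow> insertion_tableau (map f xs) = map (map f) (insertion_tableau xs)"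
  by (induction xs rule: rev_induct) (auto simp: insertion_tableau_snoc rs_insert_map_strict_mono)

lemma insertion_tableau_append_greatest:
  assumes "\<forall>z\<in>set u. z < M"
  shows "insertion_tableau (u @ [M]) = (first_row (insertion_tableau u) @ [M]) # tl (insertion_tableau u)"
    and "last_exceeds_first_row (u @ [M])"
proof -
  have "\<forall>z\<in>set (first_row (insertion_tableau u)). z < M"
    using assms set_first_row_subset set_concat_insertion_tableau by blast
  then show "insertion_tableau (u @ [M]) = (first_row (insertion_tableau u) @ [M]) # tl (insertion_tableau u)"
    and "last_exceeds_first_row (u @ [M])"
    by (simp_all add: insertion_tableau_snoc rs_insert_greatest last_exceeds_first_row_def)
qed

lemma rs_insert_below_greatest:
  assumes "\<forall>z\<in>set (concat T). z < M" "y < M" "y \<notin> set (concat T)"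
  defines "T' \<equiv> rs_insert ((first_row T @ [M]) # tl T) y"
    and "no_bump \<equiv> \<forall>z\<in>set (first_row T). z < y"
  shows "length (second_row T') = length (second_row (rs_insert T y)) + (if no_bump then 1 else 0)"
      (is ?length)
    and "M \<in> set (first_row T') \<longleftrightarrow> \<not> no_bump" (is ?first)
proof -
  have "?length \<and> ?first"
  proof (cases no_bump)
    case True
    then have below_y: "\<forall>z\<in>set (first_row T). z < y"
      by (simp add: no_bump_def)
    have "\<forall>z\<in>set (second_row T). z < M"
      using assms(1) set_first_row_subset[of "tl T"] by (cases T) auto
    then have "T' = (first_row T @ [y]) # (second_row T @ [M]) # tl (tl T)"
      using below_y assms(2) bump_at[of "first_row T" y M "[]"]
      by (simp add: T'_def rs_insert_greatest less_imp_le)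
    moreover have "rs_insert T y = (first_row T @ [y]) # tl T"
      using below_y by (simp add: rs_insert_greatest)
    moreover have "M \<notin> set (first_row T)"
      using assms(1) set_first_row_subset by blast
    ultimately show ?thesis
      using True assms(2) by simp
  next
    case False
    then obtain z where z: "z \<in> set (first_row T)" "\<not> z < y"
      by (auto simp: no_bump_def)
    moreover have "z \<noteq> y"
      using z(1) assms(3) set_first_row_subset by blast
    ultimately have "y < z"
      by simp
    then obtain r' z' where bump_y: "bump (first_row T) y = (r', Some z')"
      using z(1) snd_bump_not_None[of "first_row T" y] by (cases "bump (first_row T) y") force
    then obtain r rest where T: "T = r # rest"
      by (cases T) auto
    have "T' = (r' @ [M]) # rs_insert rest z'"
      using bump_append_Some[OF bump_y, of "[M]"] T by (simp add: T'_def)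
    moreover have "rs_insert T y = r' # rs_insert rest z'"
      using bump_y T by simp
    ultimately show ?thesis
      using False by simp
  qed
  then show ?length ?first
    by simp_all
qed

lemma insertion_tableau_insert_greatest_before_last:
  assumes "distinct u" "u \<noteq> []" "\<forall>z\<in>set u. z < M"
  defines "u' \<equiv> butlast u @ [M, last u]"
  shows "\<not> last_exceeds_first_row u'"
    and "length (second_row (insertion_tableau u')) =
           length (second_row (insertion_tableau u)) + (if last_exceeds_first_row u then 1 else 0)"
    and "M \<in> set (first_row (insertion_tableau u')) \<longleftrightarrow> \<not> last_exceeds_first_row u"
proof -
  obtain ys y where u: "u = ys @ [y]"
    using assms(2) by (cases u rule: rev_cases) auto
  define T where "T = insertion_tableau ys"
  have "set (concat T) = set ys"
    unfolding T_def by (rule set_concat_insertion_tableau)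
  then have entries: "\<forall>z\<in>set (concat T). z < M" "y < M" "y \<notin> set (concat T)"
    using assms(1,3) u by auto
  have with_M: "insertion_tableau (ys @ [M]) = (first_row T @ [M]) # tl T"
    unfolding T_def using assms(3) u by (intro insertion_tableau_append_greatest) auto
  then have "insertion_tableau u' = rs_insert ((first_row T @ [M]) # tl T) y"
    using insertion_tableau_snoc[of "ys @ [M]" y] by (simp add: u'_def u)
  moreover have "insertion_tableau u = rs_insert T y"
    by (simp add: T_def u insertion_tableau_snoc)
  moreover have "last_exceeds_first_row u \<longleftrightarrow> (\<forall>z\<in>set (first_row T). z < y)"
    by (simp add: last_exceeds_first_row_def T_def u)
  ultimately show "length (second_row (insertion_tableau u')) =
           length (second_row (insertion_tableau u)) + (if last_exceeds_first_row u then 1 else 0)"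
    and "M \<in> set (first_row (insertion_tableau u')) \<longleftrightarrow> \<not> last_exceeds_first_row u"
    using rs_insert_below_greatest[OF entries] by simp_all
  show "\<not> last_exceeds_first_row u'"
    using with_M entries(2) by (simp add: u'_def u last_exceeds_first_row_def butlast_append)
qed

definition shift_from :: "nat \<Rightarrow> nat \<Rightarrow> nat" where
  "shift_from m x = (if m \<le> x then Suc x else x)"

lemma map_shift_from_below: "\<forall>z\<in>set xs. z < m \<Longrightarrow> map (shift_from m) xs = xs"
  by (induction xs) (auto simp: shift_from_def)

lemma rs_insert_shift:
  assumes "distinct (concat T)" "\<forall>z\<in>set (concat T). z \<le> m"
  defines "T' \<equiv> rs_insert (map (map (shift_from m)) T) m"
  shows "length (second_row T') = length (second_row T) + (if m \<in> set (first_row T) then 1 else 0)"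
      (is ?length)
    and "Suc m \<notin> set (first_row T')" (is ?first)
proof -
  let ?f = "shift_from m"
  have below: "z < m" if "z \<in> set (concat T)" "z \<noteq> m" for z
    using that assms(2) by fastforce
  have "?length \<and> ?first"
  proof (cases "m \<in> set (first_row T)")
    case True
    then obtain r1 r2 rest where T: "T = (r1 @ m # r2) # rest"
      by (cases T) (auto dest: split_list)
    have "m \<notin> set r1" "m \<notin> set r2" "m \<notin> set (concat rest)"
      using assms(1) T by auto
    then have small: "\<forall>z\<in>set r1. z < m" "\<forall>z\<in>set r2. z < m" "\<forall>R\<in>set rest. \<forall>z\<in>set R. z < m"
      using below T by auto
    then have "map (map ?f) T = (r1 @ Suc m # r2) # rest"
      by (simp add: T map_shift_from_below map_idI) (simp add: shift_from_def)
    moreover have "\<forall>z\<in>set (first_row rest). z < Suc m"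
      using small(3) by (cases rest) auto
    ultimately have "T' = (r1 @ m # r2) # (first_row rest @ [Suc m]) # tl rest"
      using small bump_at[of r1 m "Suc m" r2]
      by (simp add: T'_def less_imp_le rs_insert_greatest)
    then show ?thesis
      using True small T by auto
  next
    case False
    then have small: "\<forall>z\<in>set (first_row T). z < m"
      using below set_first_row_subset by blast
    then have "map ?f (first_row T) = first_row T"
      by (rule map_shift_from_below)
    then have "T' = (first_row T @ [m]) # map (map ?f) (tl T)"
      using small rs_insert_greatest[of "map (map ?f) T" m] by (cases T) (auto simp: T'_def)
    then show ?thesis
      using False small by (auto simp: first_row_map)
  qed
  then show ?length ?first
    by simp_all
qed

lemma insertion_tableau_shift_append:
  assumes "distinct u" "\<forall>z\<in>set u. z \<le> m"
  defines "T \<equiv> insertion_tableau u" and "T' \<equiv> insertion_tableau (map (shift_from m) u @ [m])"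
  shows "length (second_row T') = length (second_row T) + (if m \<in> set (first_row T) then 1 else 0)"
    and "last_exceeds_first_row (map (shift_from m) u @ [m]) \<longleftrightarrow> m \<notin> set (first_row T)"
    and "Suc m \<notin> set (first_row T')"
proof -
  have mono: "strict_mono (shift_from m)"
    by (auto simp: strict_mono_def shift_from_def)
  have "set (concat T) = set u"
    unfolding T_def by (rule set_concat_insertion_tableau)
  then have entries: "distinct (concat T)" "\<forall>z\<in>set (concat T). z \<le> m"
    using assms(1,2) by (simp_all add: T_def distinct_concat_insertion_tableau)
  have "T' = rs_insert (map (map (shift_from m)) T) m"
    by (simp add: T'_def T_def insertion_tableau_snoc insertion_tableau_map_strict_mono[OF mono])
  then show "length (second_row T') = length (second_row T) + (if m \<in> set (first_row T) then 1 else 0)"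
    and "Suc m \<notin> set (first_row T')"
    using rs_insert_shift[OF entries] by simp_all
  have "(\<forall>z\<in>set (first_row T). shift_from m z < m) \<longleftrightarrow> m \<notin> set (first_row T)"
    using entries(2) set_first_row_subset[of T] by (fastforce simp: shift_from_def)
  then show "last_exceeds_first_row (map (shift_from m) u @ [m]) \<longleftrightarrow> m \<notin> set (first_row T)"
    by (simp add: last_exceeds_first_row_def T_def insertion_tableau_map_strict_mono[OF mono] first_row_map)
qed

section \<open>The second row as a counter\<close>

text \<open>Read along a greedy factorisation into runs, c counts the runs started so far, and
  a = False (b = False) records that k - 1 ends an increasing (decreasing) run that k can join.\<close>

fun scan_step :: "nat \<times> bool \<times> bool \<Rightarrow> bool \<times> bool \<Rightarrow> nat \<times> bool \<times> bool" where
  "scan_step (c, a, b) (p, u) =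
     (if \<not> p then (c, True, True)
      else if u then (c + (if a then 1 else 0), False, \<not> a)
      else (c + (if b then 1 else 0), \<not> b, False))"

definition scan :: "nat list \<Rightarrow> nat \<Rightarrow> nat \<times> bool \<times> bool" where
  "scan w k = foldl scan_step (0, True, True) (map (\<lambda>j. (j \<in> set w, pred_precedes w j)) [1..<k])"

lemma scan_0 [simp]: "scan w 0 = (0, True, True)"
  by (simp add: scan_def)

lemma scan_1 [simp]: "scan w (Suc 0) = (0, True, True)"
  by (simp add: scan_def)

lemma scan_Suc: "1 \<le> k \<Longrightarrow> scan w (Suc k) = scan_step (scan w k) (k \<in> set w, pred_precedes w k)"
  by (simp add: scan_def)

definition one_line_restr :: "nat list \<Rightarrow> nat \<Rightarrow> nat list" where
  "one_line_restr w k = map (word_perm (filter (\<lambda>j. j < k) w)) [1..<Suc k]"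

lemma word_perm_filter_less_permutes:
  "0 \<notin> set w \<Longrightarrow> word_perm (filter (\<lambda>j. j < k) w) permutes {1..k}"
  by (rule word_perm_permutes) (auto simp: Suc_le_eq intro!: gr0I)

lemma one_line_restr_1: "0 \<notin> set w \<Longrightarrow> one_line_restr w 1 = [1]"
proof -
  assume "0 \<notin> set w"
  then have "filter (\<lambda>j. j < 1) w = []"
    by (auto simp: filter_empty_conv intro!: gr0I)
  then show ?thesis
    by (simp add: one_line_restr_def)
qed

lemma one_line_restr_Suc:
  assumes "distinct w" "0 \<notin> set w" "1 \<le> k"
  shows "one_line_restr w (Suc k) =
    (if k \<notin> set w then one_line_restr w k @ [Suc k]
     else if pred_precedes w k then butlast (one_line_restr w k) @ [Suc k, last (one_line_restr w k)]
     else map (shift_from k) (one_line_restr w k) @ [k])"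
proof -
  let ?Q = "word_perm (filter (\<lambda>j. j < k) w)"
  have perm: "?Q permutes {1..k}"
    using assms(2) by (rule word_perm_filter_less_permutes)
  then have fixes_Suc: "?Q (Suc k) = Suc k"
    by (simp add: permutes_not_in)
  have old: "one_line_restr w k = map ?Q [1..<k] @ [?Q k]"
    using assms(3) by (simp add: one_line_restr_def)
  have "[1..<Suc (Suc k)] = [1..<k] @ [k, Suc k]"
    using assms(3) by simp
  then have new: "one_line_restr w (Suc k) = map (word_perm (filter (\<lambda>j. j < Suc k) w)) ([1..<k] @ [k, Suc k])"
    by (simp add: one_line_restr_def)
  have transp_shift: "simple_transp k j = shift_from k j" if "j \<in> {1..k}" for j
    using that by (auto simp: simple_transp_def shift_from_def)
  show ?thesis
  proof (cases "k \<in> set w")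
    case False
    then show ?thesis
      using new old fixes_Suc word_perm_filter_less_Suc[OF assms(1), of k] by simp
  next
    case True
    show ?thesis
    proof (cases "pred_precedes w k")
      case pred: True
      have "map (?Q \<circ> simple_transp k) [1..<k] = map ?Q [1..<k]"
        by (auto simp: simple_transp_def)
      then show ?thesis
        using new old fixes_Suc word_perm_filter_less_Suc[OF assms(1), of k] True pred
        by (simp add: simple_transp_def)
    next
      case False
      have "simple_transp k (?Q j) = shift_from k (?Q j)" if "j \<in> set [1..<Suc k]" for j
        using that permutes_in_image[OF perm, of j] transp_shift by auto
      then have "map (simple_transp k \<circ> ?Q) [1..<Suc k] = map (shift_from k) (one_line_restr w k)"
        unfolding one_line_restr_def map_map by (intro map_cong) auto
      then show ?thesis
        using new fixes_Suc word_perm_filter_less_Suc[OF assms(1), of k] True False assms(3)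
        by (simp add: simple_transp_def)
    qed
  qed
qed

lemma one_line_restr_distinct_set:
  assumes "0 \<notin> set w"
  shows "distinct (one_line_restr w k)" "set (one_line_restr w k) = {1..k}"
proof -
  have perm: "word_perm (filter (\<lambda>j. j < k) w) permutes {1..k}"
    using assms by (rule word_perm_filter_less_permutes)
  show "distinct (one_line_restr w k)"
    unfolding one_line_restr_def distinct_map
    using permutes_inj_on[OF perm] by (auto intro: inj_on_subset)
  show "set (one_line_restr w k) = {1..k}"
    unfolding one_line_restr_def set_map set_upt atLeastLessThanSuc_atLeastAtMost
    using permutes_image[OF perm] .
qed

lemma scan_eq_insertion_tableau:
  assumes "distinct w" "0 \<notin> set w" "1 \<le> k"
  shows "scan w k = (length (second_row (insertion_tableau (one_line_restr w k))),
                     last_exceeds_first_row (one_line_restr w k),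
                     k \<in> set (first_row (insertion_tableau (one_line_restr w k))))"
  using assms(3)
proof (induction k rule: nat_induct_at_least)
  case base
  then show ?case
    using one_line_restr_1[OF assms(2)]
    by (simp add: insertion_tableau_def last_exceeds_first_row_def)
next
  case (Suc k)
  let ?u = "one_line_restr w k"
  have u: "distinct ?u" "set ?u = {1..k}"
    using one_line_restr_distinct_set[OF assms(2)] by auto
  have step: "scan w (Suc k) = scan_step (scan w k) (k \<in> set w, pred_precedes w k)"
    using Suc.hyps by (rule scan_Suc)
  show ?case
  proof (cases "k \<in> set w")
    case False
    have "\<forall>z\<in>set ?u. z < Suc k"
      using u by auto
    then show ?thesis
      using insertion_tableau_append_greatest[of ?u "Suc k"] one_line_restr_Suc[OF assms(1,2) Suc.hyps]
        step Suc.IH False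
      by simp
  next
    case True
    show ?thesis
    proof (cases "pred_precedes w k")
      case pred: True
      have "?u \<noteq> []" "\<forall>z\<in>set ?u. z < Suc k"
        using u Suc.hyps by auto
      note insert = insertion_tableau_insert_greatest_before_last[OF u(1) this]
      show ?thesis
        using insert one_line_restr_Suc[OF assms(1,2) Suc.hyps] step Suc.IH True pred
        by simp
    next
      case False
      have "\<forall>z\<in>set ?u. z \<le> k"
        using u by auto
      note shift = insertion_tableau_shift_append[OF u(1) this]
      show ?thesis
        using shift one_line_restr_Suc[OF assms(1,2) Suc.hyps] step Suc.IH True False
        by simp
    qed
  qed
qed

lemma lambda_row_2: "lambda_row n v 2 = length (second_row (P_tableau n v))"
  unfolding lambda_row_def rs_shape_def
  by (cases "P_tableau n v" rule: remdups_adj.cases) auto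

lemma lambda_row_2_eq_scan:
  assumes "distinct w" "set w \<subseteq> {1..<n}" "word_perm w = v"
  shows "lambda_row n v 2 = fst (scan w n)"
proof (cases "n = 0")
  case True
  then show ?thesis
    by (simp add: lambda_row_2 P_tableau_def)
next
  case False
  have "filter (\<lambda>j. j < n) w = w"
    using assms(2) by (auto simp: filter_id_conv)
  then have "P_tableau n v = insertion_tableau (one_line_restr w n)"
    using assms(3) by (simp add: P_tableau_def insertion_tableau_def one_line_restr_def)
  moreover have "0 \<notin> set w"
    using assms(2) by auto
  ultimately show ?thesis
    using scan_eq_insertion_tableau[OF assms(1), of n] False by (simp add: lambda_row_2)
qed

section \<open>Runs bound the counter\<close>

definition run_links :: "nat list list \<Rightarrow> nat set" where
  "run_links rs = (\<Union>r\<in>set rs. {j \<in> set r. 0 < j \<and> j - 1 \<in> set r})"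

lemma set_run:
  assumes "is_run r"
  shows "\<exists>a b. set r = {a..a + b} \<and> length r = Suc b"
proof -
  obtain a b where "r = [a..<Suc (a + b)] \<or> r = rev [a..<Suc (a + b)]"
    using assms by (auto simp: is_run_def)
  then have "set r = {a..a + b} \<and> length r = Suc b"
    by (auto simp only: set_rev length_rev set_upt length_upt atLeastLessThanSuc_atLeastAtMost)
  then show ?thesis
    by blast
qed

lemma length_add_card_run_links:
  assumes "\<forall>r\<in>set rs. is_run r" "distinct (concat rs)" "0 \<notin> set (concat rs)"
  shows "length rs + card (run_links rs) = card (set (concat rs))"
  using assms
proof (induction rs)
  case (Cons r rs)
  let ?links = "{j \<in> set r. 0 < j \<and> j - 1 \<in> set r}"
  obtain a b where ab: "set r = {a..a + b}" "length r = Suc b"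
    using set_run Cons.prems(1) by force
  have "0 < a"
    using Cons.prems(3) ab by (auto intro!: gr0I)
  with ab have "?links = {Suc a..a + b}"
    by auto
  then have card_links: "card ?links = b"
    by simp
  have "run_links (r # rs) = ?links \<union> run_links rs"
    by (simp add: run_links_def)
  moreover have "?links \<inter> run_links rs = {}" "set r \<inter> set (concat rs) = {}"
    using Cons.prems(2) by (auto simp: run_links_def)
  moreover have "finite (run_links rs)"
    by (auto simp: run_links_def)
  ultimately show ?case
    using Cons ab card_links by (simp add: card_Un_disjoint)
qed (simp add: run_links_def)

lemma pred_precedes_append_middle:
  assumes "distinct (A @ R @ B)" "j \<in> set R" "j - 1 \<in> set R"
  shows "pred_precedes (A @ R @ B) j = pred_precedes R j"
proof -
  obtain R1 R2 where R: "R = R1 @ j # R2"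
    using assms(2) by (meson split_list)
  have "pred_precedes (A @ R @ B) j \<longleftrightarrow> j - 1 \<in> set (A @ R1)"
    using pred_precedes_split[of "A @ R1" j "R2 @ B"] assms(1) R by simp
  moreover have "distinct R"
    using assms(1) by simp
  then have "pred_precedes R j \<longleftrightarrow> j - 1 \<in> set R1"
    using pred_precedes_split[of R1 j R2] R by simp
  moreover have "j - 1 \<notin> set A"
    using assms(1,3) by auto
  ultimately show ?thesis
    by simp
qed

lemma upt_split_at: "a \<le> j \<Longrightarrow> j < c \<Longrightarrow> [a..<c] = [a..<j] @ j # [Suc j..<c]"
  by (metis le_Suc_ex upt_add_eq_append upt_conv_Cons less_imp_le_nat)

lemma pred_precedes_upt: "a < j \<Longrightarrow> j < c \<Longrightarrow> pred_precedes [a..<c] j"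
  using pred_precedes_split[of "[a..<j]" j "[Suc j..<c]"] upt_split_at[of a j c] by auto

lemma not_pred_precedes_rev_upt: "a \<le> j \<Longrightarrow> j < c \<Longrightarrow> \<not> pred_precedes (rev [a..<c]) j"
  using pred_precedes_split[of "rev [Suc j..<c]" j "rev [a..<j]"] upt_split_at[of a j c] by auto

lemma pred_precedes_run_links:
  assumes runs: "\<forall>r\<in>set rs. is_run r" and dist: "distinct (concat rs)"
    and "j \<in> run_links rs" "Suc j \<in> run_links rs"
  shows "pred_precedes (concat rs) j = pred_precedes (concat rs) (Suc j)"
proof -
  obtain R where R: "R \<in> set rs" "j \<in> set R" "j - 1 \<in> set R"
    using assms(3) by (auto simp: run_links_def)
  obtain R' where R': "R' \<in> set rs" "Suc j \<in> set R'" "j \<in> set R'"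
    using assms(4) by (auto simp: run_links_def)
  obtain As Bs where rs: "rs = As @ R # Bs"
    using R(1) by (meson split_list)
  have "R' = R"
    using dist R R' by (auto simp: rs)
  then have "Suc j \<in> set R"
    using R' by simp
  have dist': "distinct (concat As @ R @ concat Bs)"
    using dist rs by simp
  have prec: "pred_precedes (concat rs) i = pred_precedes R i" if "i \<in> set R" "i - 1 \<in> set R" for i
    using pred_precedes_append_middle[OF dist' that] rs by simp
  have "0 < j"
    using assms(3) by (auto simp: run_links_def)
  have prec_j: "pred_precedes (concat rs) j = pred_precedes R j"
    and prec_Suc: "pred_precedes (concat rs) (Suc j) = pred_precedes R (Suc j)"
    using prec R \<open>Suc j \<in> set R\<close> by auto
  obtain a b where "R = [a..<a+b+1] \<or> R = rev [a..<a+b+1]"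
    using runs R(1) unfolding is_run_def by blast
  then show ?thesis
  proof
    assume R_eq: "R = [a..<a+b+1]"
    then have "a < j" "Suc j < a+b+1"
      using R(3) \<open>Suc j \<in> set R\<close> \<open>0 < j\<close> by auto
    then show ?thesis
      using prec_j prec_Suc pred_precedes_upt[of a j "a+b+1"] pred_precedes_upt[of a "Suc j" "a+b+1"]
      by (simp add: R_eq)
  next
    assume R_eq: "R = rev [a..<a+b+1]"
    then have "a \<le> j" "Suc j < a+b+1"
      using R(2) \<open>Suc j \<in> set R\<close> by auto
    then show ?thesis
      using prec_j prec_Suc not_pred_precedes_rev_upt[of a j "a+b+1"]
        not_pred_precedes_rev_upt[of a "Suc j" "a+b+1"]
      by (simp add: R_eq)
  qed
qed

lemma card_filter_less_Suc:
  "finite A \<Longrightarrow> card {j \<in> A. j < Suc K} = card {j \<in> A. j < K} + (if K \<in> A then 1 else 0)"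
proof -
  assume "finite A"
  moreover have "{j \<in> A. j < Suc K} = (if K \<in> A then insert K {j \<in> A. j < K} else {j \<in> A. j < K})"
    by (auto simp: less_Suc_eq)
  ultimately show ?thesis
    by simp
qed

text \<open>Think of L as the letters linked to their predecessor inside a run: they never start a
  run, so the counter stays below the number of letters outside L. The last three conjuncts carry
  the slack this bound needs through the next step.\<close>

lemma scan_count_invariant:
  assumes "0 \<notin> set w"
    and linked: "\<And>j. j \<in> L \<Longrightarrow> j \<in> set w \<and> j - 1 \<in> set w"
    and coherent: "\<And>j. j \<in> L \<Longrightarrow> Suc j \<in> L \<Longrightarrow> pred_precedes w j = pred_precedes w (Suc j)"
    and "1 \<le> K"
  shows "case scan w K of (c, a, b) \<Rightarrow>
      c + card {j \<in> L. j < K} \<le> card {j \<in> set w. j < K} \<and>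
      (a \<and> b \<longleftrightarrow> K - 1 \<notin> set w) \<and>
      (a \<noteq> b \<and> K - 1 \<notin> L \<longrightarrow> c + card {j \<in> L. j < K} < card {j \<in> set w. j < K}) \<and>
      (\<not> a \<and> b \<longrightarrow> pred_precedes w (K - 1)) \<and> (a \<and> \<not> b \<longrightarrow> \<not> pred_precedes w (K - 1))"
  using assms(4)
proof (induction K rule: nat_induct_at_least)
  case base
  have empty: "{j \<in> L. j < 1} = {}" "{j \<in> set w. j < 1} = {}"
    using linked assms(1) by fastforce+
  show ?case
    unfolding empty using assms(1) by simp
next
  case (Suc K)
  obtain c a b where state: "scan w K = (c, a, b)"
    by (metis prod_cases3)
  have "finite L"
    using linked by (meson finite_subset subsetI finite_set)
  note card_Suc = card_filter_less_Suc[OF this, of K] card_filter_less_Suc[OF finite_set, of w K]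
  have "K \<in> L \<Longrightarrow> K \<in> set w \<and> K - 1 \<in> set w" "pred_precedes w K \<Longrightarrow> K - 1 \<in> set w"
    using linked pred_precedes_imp_mem by blast+
  moreover have "K \<in> L \<Longrightarrow> K - 1 \<in> L \<Longrightarrow> pred_precedes w (K - 1) = pred_precedes w K"
    using coherent[of "K - 1"] Suc.hyps by simp
  ultimately show ?case
    using Suc.IH state card_Suc scan_Suc[OF Suc.hyps, of w]
    by (cases "K \<in> set w"; cases "pred_precedes w K"; cases "K \<in> L"; cases "K - 1 \<in> L"; auto)
qed

lemma scan_le_length_runs:
  assumes runs: "\<forall>r\<in>set rs. is_run r" and dist: "distinct (concat rs)"
    and letters: "set (concat rs) \<subseteq> {1..<n}"
  shows "fst (scan (concat rs) n) \<le> length rs"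
proof (cases "n = 0")
  case False
  let ?w = "concat rs"
  have "0 \<notin> set ?w"
    using letters by auto
  moreover have "\<And>j. j \<in> run_links rs \<Longrightarrow> j \<in> set ?w \<and> j - 1 \<in> set ?w"
    by (auto simp: run_links_def)
  moreover note pred_precedes_run_links[OF runs dist]
  ultimately have "fst (scan ?w n) + card {j \<in> run_links rs. j < n} \<le> card {j \<in> set ?w. j < n}"
    using scan_count_invariant[of ?w "run_links rs" n] False by (auto split: prod.splits)
  moreover have "{j \<in> run_links rs. j < n} = run_links rs" "{j \<in> set ?w. j < n} = set ?w"
    using letters by (auto simp: run_links_def)
  ultimately show ?thesis
    using length_add_card_run_links[OF runs dist \<open>0 \<notin> set ?w\<close>] by simp
qed simp

section \<open>A factorisation into runs attaining the bound\<close>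

definition greedy_runs :: "nat list \<Rightarrow> nat \<Rightarrow> nat list list \<Rightarrow> bool" where
  "greedy_runs w K rs \<longleftrightarrow>
     (\<forall>r\<in>set rs. is_run r) \<and> distinct (concat rs) \<and> set (concat rs) = {j \<in> set w. j < K} \<and>
     (\<forall>j<K. pred_precedes (concat rs) j = pred_precedes w j) \<and> length rs = fst (scan w K) \<and>
     (\<not> fst (snd (scan w K)) \<longrightarrow> (\<exists>A B i. i < K \<and> rs = A @ [[i..<K]] @ B)) \<and>
     (\<not> snd (snd (scan w K)) \<longrightarrow> (\<exists>A B i. i < K \<and> rs = A @ [rev [i..<K]] @ B))"

lemma is_run_upt: "i < K \<Longrightarrow> is_run [i..<K]"
  unfolding is_run_def by (intro exI[of _ i] exI[of _ "K - i - 1"]) simp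

lemma is_run_rev_upt: "i < K \<Longrightarrow> is_run (rev [i..<K])"
  unfolding is_run_def by (intro exI[of _ i] exI[of _ "K - i - 1"]) simp

lemma greedy_runs_1: "0 \<notin> set w \<Longrightarrow> greedy_runs w 1 []"
  by (auto simp: greedy_runs_def pred_precedes_def)

lemma greedy_runs_SucI:
  assumes inv: "greedy_runs w K rs" and "K \<in> set w"
    and old: "concat rs = xs @ ys" and new: "concat rs' = xs @ K # ys"
    and prec: "K - 1 \<in> set xs \<longleftrightarrow> pred_precedes w K"
    and "\<forall>r\<in>set rs'. is_run r" "length rs' = fst (scan w (Suc K))"
    and "\<not> fst (snd (scan w (Suc K))) \<longrightarrow> (\<exists>A B i. i < Suc K \<and> rs' = A @ [[i..<Suc K]] @ B)"
    and "\<not> snd (snd (scan w (Suc K))) \<longrightarrow> (\<exists>A B i. i < Suc K \<and> rs' = A @ [rev [i..<Suc K]] @ B)"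
  shows "greedy_runs w (Suc K) rs'"
proof -
  have below: "\<forall>j\<in>set (xs @ ys). j < K" and "distinct (xs @ ys)"
    using inv old by (auto simp: greedy_runs_def)
  then have dist: "distinct (concat rs')"
    using new by auto
  have filter: "filter (\<lambda>j. j < K) (concat rs') = concat rs"
    using below new old by (simp add: filter_True)
  have "set (concat rs') = {j \<in> set w. j < Suc K}"
    using inv old new assms(2) by (auto simp: greedy_runs_def less_Suc_eq)
  moreover have "pred_precedes (concat rs') j = pred_precedes w j" if "j < Suc K" for j
  proof (cases "j = K")
    case True
    then show ?thesis
      using pred_precedes_split[of xs K ys] dist new prec by simp
  next
    case False
    then have "j < K"
      using that by simp
    then have "pred_precedes (concat rs') j = pred_precedes (concat rs) j"
      using pred_precedes_filter_less[OF dist] filter by metis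
    then show ?thesis
      using inv \<open>j < K\<close> by (simp add: greedy_runs_def)
  qed
  ultimately show ?thesis
    using dist assms(6-9) by (simp add: greedy_runs_def)
qed

lemma greedy_runs_Suc_absent:
  assumes "greedy_runs w K rs" "1 \<le> K" "K \<notin> set w"
  shows "greedy_runs w (Suc K) rs"
proof -
  have "{j \<in> set w. j < Suc K} = {j \<in> set w. j < K}"
    using assms(3) by (auto simp: less_Suc_eq)
  moreover have "K \<notin> set (concat rs)"
    using assms(1) by (auto simp: greedy_runs_def)
  then have "pred_precedes (concat rs) K = pred_precedes w K"
    using assms(3) pred_precedes_imp_mem by blast
  moreover obtain c a b where "scan w K = (c, a, b)"
    by (metis prod_cases3)
  ultimately show ?thesis
    using assms scan_Suc[OF assms(2), of w] by (auto simp: greedy_runs_def less_Suc_eq)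
qed

lemma greedy_runs_Suc_new_last:
  assumes inv: "greedy_runs w K rs" and "1 \<le> K" and asc: "pred_precedes w K"
    and state: "scan w K = (c, True, b)"
  shows "greedy_runs w (Suc K) (rs @ [[K]])"
proof (rule greedy_runs_SucI[OF inv _ _ _ _ _ _ _ _, of "concat rs" "[]"])
  show "K \<in> set w" "K - 1 \<in> set (concat rs) \<longleftrightarrow> pred_precedes w K"
    using inv asc pred_precedes_imp_mem[OF asc] assms(2) by (auto simp: greedy_runs_def)
  show "\<forall>r\<in>set (rs @ [[K]]). is_run r"
    using inv is_run_upt[of K "Suc K"] by (auto simp: greedy_runs_def)
  have "scan w (Suc K) = (Suc c, False, False)"
    using scan_Suc[OF assms(2)] state asc pred_precedes_imp_mem[OF asc] by simp
  then show "length (rs @ [[K]]) = fst (scan w (Suc K))"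
    using inv state by (simp add: greedy_runs_def)
  show "\<not> fst (snd (scan w (Suc K))) \<longrightarrow> (\<exists>A B i. i < Suc K \<and> rs @ [[K]] = A @ [[i..<Suc K]] @ B)"
    "\<not> snd (snd (scan w (Suc K))) \<longrightarrow> (\<exists>A B i. i < Suc K \<and> rs @ [[K]] = A @ [rev [i..<Suc K]] @ B)"
    by (intro impI exI[of _ rs] exI[of _ "[]"] exI[of _ K]; simp)+
qed simp_all

lemma greedy_runs_Suc_extend_increasing:
  assumes inv: "greedy_runs w K rs" and "1 \<le> K" and asc: "pred_precedes w K"
    and state: "scan w K = (c, False, b)"
  obtains rs' where "greedy_runs w (Suc K) rs'"
proof -
  obtain A B i where i: "i < K" and rs: "rs = A @ [[i..<K]] @ B"
    using inv state by (auto simp: greedy_runs_def)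
  let ?rs' = "A @ [[i..<Suc K]] @ B"
  have "greedy_runs w (Suc K) ?rs'"
  proof (rule greedy_runs_SucI[OF inv _ _ _ _ _ _ _ _, of "concat A @ [i..<K]" "concat B"])
    show "K \<in> set w"
      using pred_precedes_imp_mem[OF asc] by blast
    show "K - 1 \<in> set (concat A @ [i..<K]) \<longleftrightarrow> pred_precedes w K"
      using i asc by auto
    show "\<forall>r\<in>set ?rs'. is_run r"
      using inv is_run_upt[of i "Suc K"] i by (auto simp: greedy_runs_def rs)
    have "scan w (Suc K) = (c, False, True)"
      using scan_Suc[OF assms(2)] state asc pred_precedes_imp_mem[OF asc] by simp
    then show "length ?rs' = fst (scan w (Suc K))"
      "\<not> snd (snd (scan w (Suc K))) \<longrightarrow> (\<exists>A B i. i < Suc K \<and> ?rs' = A @ [rev [i..<Suc K]] @ B)"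
      using inv state by (simp_all add: greedy_runs_def rs)
    show "\<not> fst (snd (scan w (Suc K))) \<longrightarrow> (\<exists>A' B' i'. i' < Suc K \<and> ?rs' = A' @ [[i'..<Suc K]] @ B')"
      using i by (intro impI exI[of _ A] exI[of _ B] exI[of _ i]) simp
  qed (use i in \<open>simp_all add: rs\<close>)
  then show ?thesis ..
qed

lemma greedy_runs_Suc_new_first:
  assumes inv: "greedy_runs w K rs" and "1 \<le> K" "K \<in> set w" and desc: "\<not> pred_precedes w K"
    and state: "scan w K = (c, a, True)"
  shows "greedy_runs w (Suc K) ([K] # rs)"
proof (rule greedy_runs_SucI[OF inv assms(3) _ _ _ _ _ _ _, of "[]" "concat rs"])
  show "\<forall>r\<in>set ([K] # rs). is_run r"
    using inv is_run_upt[of K "Suc K"] by (auto simp: greedy_runs_def)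
  have "scan w (Suc K) = (Suc c, False, False)"
    using scan_Suc[OF assms(2)] state assms(3) desc by simp
  then show "length ([K] # rs) = fst (scan w (Suc K))"
    using inv state by (simp add: greedy_runs_def)
  show "\<not> fst (snd (scan w (Suc K))) \<longrightarrow> (\<exists>A B i. i < Suc K \<and> [K] # rs = A @ [[i..<Suc K]] @ B)"
    "\<not> snd (snd (scan w (Suc K))) \<longrightarrow> (\<exists>A B i. i < Suc K \<and> [K] # rs = A @ [rev [i..<Suc K]] @ B)"
    by (intro impI exI[of _ "[]"] exI[of _ rs] exI[of _ K]; simp)+
qed (simp_all add: desc)

lemma greedy_runs_Suc_extend_decreasing:
  assumes inv: "greedy_runs w K rs" and "1 \<le> K" "K \<in> set w" and desc: "\<not> pred_precedes w K"
    and state: "scan w K = (c, a, False)"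
  obtains rs' where "greedy_runs w (Suc K) rs'"
proof -
  obtain A B i where i: "i < K" and rs: "rs = A @ [rev [i..<K]] @ B"
    using inv state by (auto simp: greedy_runs_def)
  let ?rs' = "A @ [rev [i..<Suc K]] @ B"
  have "distinct (concat A @ rev [i..<K] @ concat B)"
    using inv by (simp add: greedy_runs_def rs)
  moreover have "K - 1 \<in> set (rev [i..<K])"
    using i by auto
  ultimately have "K - 1 \<notin> set (concat A)"
    by auto
  have "greedy_runs w (Suc K) ?rs'"
  proof (rule greedy_runs_SucI[OF inv assms(3) _ _ _ _ _ _ _, of "concat A" "rev [i..<K] @ concat B"])
    show "K - 1 \<in> set (concat A) \<longleftrightarrow> pred_precedes w K"
      using \<open>K - 1 \<notin> set (concat A)\<close> desc by blast
    show "\<forall>r\<in>set ?rs'. is_run r"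
      using inv is_run_rev_upt[of i "Suc K"] i by (auto simp: greedy_runs_def rs)
    have "scan w (Suc K) = (c, True, False)"
      using scan_Suc[OF assms(2)] state assms(3) desc by simp
    then show "length ?rs' = fst (scan w (Suc K))"
      "\<not> fst (snd (scan w (Suc K))) \<longrightarrow> (\<exists>A B i. i < Suc K \<and> ?rs' = A @ [[i..<Suc K]] @ B)"
      using inv state by (simp_all add: greedy_runs_def rs)
    show "\<not> snd (snd (scan w (Suc K))) \<longrightarrow> (\<exists>A' B' i'. i' < Suc K \<and> ?rs' = A' @ [rev [i'..<Suc K]] @ B')"
      using i by (intro impI exI[of _ A] exI[of _ B] exI[of _ i]) simp
  qed (use i in \<open>simp_all add: rs\<close>)
  then show ?thesis ..
qed

lemma greedy_runs_exist:
  assumes "0 \<notin> set w" "1 \<le> K"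
  shows "\<exists>rs. greedy_runs w K rs"
  using assms(2)
proof (induction K rule: nat_induct_at_least)
  case base
  show ?case
    using greedy_runs_1[OF assms(1)] ..
next
  case (Suc K)
  then obtain rs where inv: "greedy_runs w K rs"
    by blast
  obtain c a b where state: "scan w K = (c, a, b)"
    by (metis prod_cases3)
  consider "K \<notin> set w" | "pred_precedes w K" | "K \<in> set w" "\<not> pred_precedes w K"
    by blast
  then show ?case
  proof cases
    case 1
    then show ?thesis
      using greedy_runs_Suc_absent[OF inv Suc.hyps] by blast
  next
    case 2
    then show ?thesis
      using greedy_runs_Suc_new_last[OF inv Suc.hyps, of c b]
        greedy_runs_Suc_extend_increasing[OF inv Suc.hyps, of c b] state
      by (cases a) auto
  next
    case 3
    then show ?thesis
      using greedy_runs_Suc_new_first[OF inv Suc.hyps, of c a]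
        greedy_runs_Suc_extend_decreasing[OF inv Suc.hyps, of c a] state
      by (cases b) auto
  qed
qed

lemma reduced_run_factorisation_exists:
  assumes "reduced_word n v w" "distinct w"
  shows "\<exists>rs. length rs = fst (scan w n) \<and> (\<forall>r\<in>set rs. is_run r) \<and> reduced_word n v (concat rs)"
proof (cases "n = 0")
  case True
  then show ?thesis
    using assms(1) by (intro exI[of _ "[]"]) (auto simp: reduced_word_def is_word_def)
next
  case False
  have letters: "set w \<subseteq> {1..<n}"
    using assms(1) by (simp add: reduced_word_def is_word_def)
  then obtain rs where inv: "greedy_runs w n rs"
    using greedy_runs_exist[of w n] False by fastforce
  let ?r = "concat rs"
  have dist: "distinct ?r" and "set ?r = {j \<in> set w. j < n}"
    using inv by (simp_all add: greedy_runs_def)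
  then have same_letters: "set ?r = set w"
    using letters by auto
  have "pred_precedes ?r j = pred_precedes w j" for j
  proof (cases "j < n")
    case False
    then have "j \<notin> set ?r" "j \<notin> set w"
      using same_letters letters by auto
    then show ?thesis
      using pred_precedes_imp_mem by blast
  qed (use inv in \<open>simp add: greedy_runs_def\<close>)
  then have "word_perm ?r = word_perm w"
    using word_perm_eq_if_same_precedences[OF dist assms(2) same_letters] by blast
  moreover have "length ?r = length w"
    using dist assms(2) same_letters by (metis distinct_card)
  ultimately have "reduced_word n v ?r"
    using assms(1) same_letters by (simp add: reduced_word_def is_word_def)
  then show ?thesis
    using inv by (auto simp: greedy_runs_def)
qed

lemma lambda_row_2_le_length_runs:
  assumes "boolean_perm n v" "\<forall>r\<in>set rs. is_run r" "reduced_word n v (concat rs)"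
  shows "lambda_row n v 2 \<le> length rs"
proof -
  have dist: "distinct (concat rs)"
    using assms(1,3) by (simp add: boolean_perm_def)
  have letters: "set (concat rs) \<subseteq> {1..<n}" and "word_perm (concat rs) = v"
    using assms(3) by (auto simp: reduced_word_def is_word_def)
  then have "lambda_row n v 2 = fst (scan (concat rs) n)"
    using dist lambda_row_2_eq_scan by blast
  also have "\<dots> \<le> length rs"
    using scan_le_length_runs[OF assms(2) dist letters] .
  finally show ?thesis .
qed

theorem theorem6p4:
  fixes n :: nat and v :: "nat \<Rightarrow> nat"
  assumes "v permutes {1..n}"
    and "boolean_perm n v"
  shows "lambda_row n v 2 = run_num n v"
proof -
  obtain w where w: "reduced_word n v w"
    using reduced_word_exists[OF assms(1)] ..
  then have dist: "distinct w"
    using assms(2) by (simp add: boolean_perm_def)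
  then have lambda: "lambda_row n v 2 = fst (scan w n)"
    using w lambda_row_2_eq_scan by (auto simp: reduced_word_def is_word_def)
  have "run_num n v = lambda_row n v 2"
    unfolding run_num_def
  proof (rule Least_equality)
    show "\<exists>rs. length rs = lambda_row n v 2 \<and> (\<forall>r\<in>set rs. is_run r) \<and> reduced_word n v (concat rs)"
      using reduced_run_factorisation_exists[OF w dist] lambda by simp
  next
    show "lambda_row n v 2 \<le> k"
      if "\<exists>rs. length rs = k \<and> (\<forall>r\<in>set rs. is_run r) \<and> reduced_word n v (concat rs)" for k
      using that lambda_row_2_le_length_runs[OF assms(2)] by blast
  qed
  then show ?thesis
    by simp
qed

end
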